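(* For all integers $n\ge1$ the following hold in the $q$-shuffle algebra $\mathbb V$: $$\sum_{k=0}^n G_k\star\tilde G_{n-k}\,q^{n-2k}=q\sum_{k=0}^{n-1}W_{-k}\star W_{n-k}\,q^{n-1-2k},$$ $$\sum_{k=0}^n G_k\star\tilde G_{n-k}\,q^{2k-n}=q\sum_{k=0}^{n-1}W_{n-k}\star W_{-k}\,q^{n-1-2k},$$ $$\sum_{k=0}^n \tilde G_k\star G_{n-k}\,q^{n-2k}=q\sum_{k=0}^{n-1}W_{n-k}\star W_{-k}\,q^{2k+1-n},$$ $$\sum_{k=0}^n \tilde G_k\star G_{n-k}\,q^{2k-n}=q\sum_{k=0}^{n-1}W_{-k}\star W_{n-k}\,q^{2k+1-n}.$$
   Context: Let $\mathbb F$ be a field and let $q\in\mathbb F$ be nonzero and not a root of unity. Let $\mathbb V$ be the free associative $\mathbb F$-algebra on noncommuting $x,y$, with basis the words (including $1$). Juxtaposition denotes concatenation. Set $\langle x,x\rangle=\langle y,y\rangle=2$ and $\langle x,y\rangle=\langle y,x\rangle=-2$. The $q$-shuffle product $\star$ is the bilinear product determined as follows: - $1\star v=v\star 1=v$; - for nontrivial words $u=u_1\cdots u_r$ and $v=v_1\cdots v_s$, $$u\star v=u_1((u_2\cdots u_r)\star v)+v_1(u\star(v_2\cdots v_s))q^{\langle u_1,v_1\rangle+\cdots+\langle u_r,v_1\rangle}.$$ This makes $\mathbb V$ an associative algebra, the $q$-shuffle algebra. For $k\in\mathbb N$: - $W_{-k}=xyx\cdots x$ is the alternating word of length $2k+1$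 beginning and ending with $x$; - $W_{k+1}=yxy\cdots y$ is the alternating word of length $2k+1$ beginning and ending with $y$; - $G_k=yxyx\cdots yx$ is the word of length $2k$; - $\tilde G_k=xyxy\cdots xy$ is the word of length $2k$; - $G_0=\tilde G_0=1$. *)

theory Defs
  imports Main "HOL-Library.Poly_Mapping"
begin

text \<open>Letters x, y; words are lists of letters; the free algebra V is the space of
finitely supported F-valued functions on words (basis = words, 1 = empty word).\<close>

datatype letter = X | Y

type_synonym word = "letter list"
type_synonym 'a V = "word \<Rightarrow>\<^sub>0 'a"

fun bform :: "letter \<Rightarrow> letter \<Rightarrow> int" where
  "bform a b = (if a = b then 2 else -2)"

definition wd :: "word \<Rightarrow> 'a::zero_neq_one V" where
  "wd w = Poly_Mapping.single w 1"

definition vsmult :: "'a::semiring_0 \<Rightarrow> 'a V \<Rightarrow> 'a V" where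
  "vsmult c f = Poly_Mapping.map (\<lambda>t. c * t) f"

definition prepend :: "letter \<Rightarrow> 'a::comm_monoid_add V \<Rightarrow> 'a V" where
  "prepend a f = (\<Sum>w\<in>Poly_Mapping.keys f. Poly_Mapping.single (a # w) (Poly_Mapping.lookup f w))"

fun qshw :: "'a::field \<Rightarrow> word \<Rightarrow> word \<Rightarrow> 'a V" where
  "qshw q [] v = wd v"
| "qshw q (a # u) [] = wd (a # u)"
| "qshw q (a # u) (b # v) =
     prepend a (qshw q u (b # v))
     + vsmult (q powi (\<Sum>c\<leftarrow>a # u. bform c b)) (prepend b (qshw q (a # u) v))"

definition qshuffle :: "'a::field \<Rightarrow> 'a V \<Rightarrow> 'a V \<Rightarrow> 'a V" where
  "qshuffle q f g = (\<Sum>u\<in>Poly_Mapping.keys f. \<Sum>v\<in>Poly_Mapping.keys g. vsmult (Poly_Mapping.lookup f u * Poly_Mapping.lookup g v) (qshw q u v))"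

definition Wneg :: "nat \<Rightarrow> word" where
  "Wneg k = concat (replicate k [X, Y]) @ [X]"
definition Wpos :: "nat \<Rightarrow> word" where  \<comment> \<open>W_{k+1} = yxy...y, length 2k+1\<close>
  "Wpos k = concat (replicate k [Y, X]) @ [Y]"
definition Gw :: "nat \<Rightarrow> word" where
  "Gw k = concat (replicate k [Y, X])"
definition Gtw :: "nat \<Rightarrow> word" where
  "Gtw k = concat (replicate k [X, Y])"

end

theory Submission
  imports Defs
begin

text \<open>
  Compare the coefficient of each word \<open>w\<close> on both sides. The coefficient of \<open>w\<close> in
  \<open>u \<star> v\<close> obeys a recursion in the first letter of \<open>w\<close>. Since \<open>G\<^sub>k\<close> and \<open>G~\<^sub>k\<close>
  pair to zero with every letter, removing an initial \<open>x\<close> or \<open>y\<close> turns both sides of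
  the first identity into the same sum; for \<open>y\<close> the factor \<open>q\<^sup>-\<^sup>2\<close> picked up on the
  right matches the index shift \<open>k \<mapsto> k + 1\<close> on the left. The other three identities
  follow from the first by two symmetries of the coefficients: reversing all words
  (which also exchanges the factors, as the form is symmetric) and swapping \<open>x \<leftrightarrow> y\<close>
  (which preserves the form).
\<close>

definition weight :: "word \<Rightarrow> letter \<Rightarrow> int" where
  "weight u c = (\<Sum>d\<leftarrow>u. bform d c)"

definition shuffle_coeff :: "'a::field \<Rightarrow> word \<Rightarrow> word \<Rightarrow> word \<Rightarrow> 'a" where
  "shuffle_coeff q u v w = Poly_Mapping.lookup (qshw q u v) w"

lemma weight_Nil [simp]: "weight [] c = 0"
  and weight_Cons [simp]: "weight (a # u) c = bform a c + weight u c"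
  and weight_append [simp]: "weight (u @ v) c = weight u c + weight v c"
  by (simp_all add: weight_def)

lemma lookup_wd: "Poly_Mapping.lookup (wd w :: 'a::zero_neq_one V) w' = (if w = w' then 1 else 0)"
  by (simp add: wd_def lookup_single when_def)

lemma lookup_vsmult: "Poly_Mapping.lookup (vsmult c f) w = c * Poly_Mapping.lookup f w"
  by (simp add: vsmult_def map.rep_eq when_def)

lemma lookup_prepend_Nil: "Poly_Mapping.lookup (prepend a f) [] = 0"
  by (simp add: prepend_def lookup_sum lookup_single)

lemma lookup_prepend_Cons:
  "Poly_Mapping.lookup (prepend a f) (b # w) = (if a = b then Poly_Mapping.lookup f w else 0)"
proof -
  have "Poly_Mapping.lookup (prepend a f) (b # w) =
        (\<Sum>v\<in>Poly_Mapping.keys f. if a = b \<and> v = w then Poly_Mapping.lookup f v else 0)"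
    by (simp add: prepend_def lookup_sum lookup_single when_def)
  then show ?thesis
    by (simp add: sum.delta in_keys_iff)
qed

lemma vsmult_one: "vsmult 1 (f :: 'a::semiring_1 V) = f"
  by (rule poly_mapping_eqI) (simp add: lookup_vsmult)

lemma qshuffle_wd: "qshuffle q (wd u) (wd v) = qshw q u v"
  by (simp add: qshuffle_def wd_def lookup_single vsmult_one)

lemma lookup_sum_qshuffle_wd:
  "Poly_Mapping.lookup (\<Sum>k\<in>A. vsmult (c k) (qshuffle q (wd (u k)) (wd (v k)))) w
   = (\<Sum>k\<in>A. c k * shuffle_coeff q (u k) (v k) w)"
  by (simp add: lookup_sum lookup_vsmult qshuffle_wd shuffle_coeff_def)

lemma qshw_Nil_right [simp]: "qshw q u [] = wd u"
  by (cases u) simp_all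

lemma shuffle_coeff_Nil_left: "shuffle_coeff q [] v w = (if v = w then 1 else 0)"
  by (simp add: shuffle_coeff_def lookup_wd)

lemma shuffle_coeff_Nil_right: "shuffle_coeff q u [] w = (if u = w then 1 else 0)"
  by (simp add: shuffle_coeff_def lookup_wd)

lemma shuffle_coeff_empty_word: "shuffle_coeff q u v [] = (if u = [] \<and> v = [] then 1 else 0)"
  by (cases u; cases v) (simp_all add: shuffle_coeff_def lookup_wd lookup_add lookup_prepend_Nil lookup_vsmult)

lemma shuffle_coeff_Cons:
  "shuffle_coeff q u v (c # w) =
     (if u \<noteq> [] \<and> hd u = c then shuffle_coeff q (tl u) v w else 0)
   + (if v \<noteq> [] \<and> hd v = c then q powi weight u c * shuffle_coeff q u (tl v) w else 0)"
proof (cases u)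
  case Nil
  then show ?thesis by (cases v) (auto simp: shuffle_coeff_Nil_left)
next
  case (Cons a u')
  then show ?thesis
    by (cases v) (auto simp: shuffle_coeff_def lookup_wd lookup_add lookup_prepend_Cons lookup_vsmult weight_def)
qed

lemma bform_commute: "bform a b = bform b a"
  by simp

lemma list_first_last_cases:
  obtains "u = []" | a where "u = [a]" | a m e where "u = a # m @ [e]"
proof (cases u)
  case (Cons a u')
  then show ?thesis using that by (cases u' rule: rev_cases) auto
qed (use that in blast)

lemma shuffle_coeff_snoc:
  fixes q :: "'a::field"
  assumes "q \<noteq> 0"
  shows "shuffle_coeff q u v (w @ [c]) =
     (if u \<noteq> [] \<and> last u = c then q powi weight v c * shuffle_coeff q (butlast u) v w else 0)
   + (if v \<noteq> [] \<and> last v = c then shuffle_coeff q u (butlast v) w else 0)"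
proof (induction w arbitrary: u v)
  case Nil
  show ?case
    by (cases u rule: list_first_last_cases; cases v rule: rev_cases)
      (auto simp: shuffle_coeff_Cons shuffle_coeff_empty_word shuffle_coeff_Nil_right)
next
  case (Cons d w)
  have powi_add: "q powi (i + j) = q powi i * q powi j" for i j
    using assms by (simp add: power_int_add)
  show ?case
    unfolding append_Cons shuffle_coeff_Cons Cons.IH
    by (cases u rule: list_first_last_cases; cases v rule: list_first_last_cases)
      (simp_all add: shuffle_coeff_Cons shuffle_coeff_Nil_right shuffle_coeff_empty_word
         powi_add bform_commute assms algebra_simps del: bform.simps)
qed

lemma weight_rev [simp]: "weight (rev u) c = weight u c"
  by (induction u) simp_all

lemma shuffle_coeff_rev:
  fixes q :: "'a::field"
  assumes "q \<noteq> 0"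
  shows "shuffle_coeff q u v w = shuffle_coeff q (rev v) (rev u) (rev w)"
proof (induction w arbitrary: u v)
  case Nil
  then show ?case by (simp add: shuffle_coeff_empty_word)
next
  case (Cons c w)
  then show ?case
    by (simp add: shuffle_coeff_Cons shuffle_coeff_snoc[OF assms] last_rev butlast_rev hd_rev)
qed

fun swap_letter :: "letter \<Rightarrow> letter" where
  "swap_letter X = Y"
| "swap_letter Y = X"

lemma swap_letter_eq_iff [simp]: "swap_letter a = swap_letter b \<longleftrightarrow> a = b"
  by (cases a; cases b) simp_all

lemma weight_map_swap_letter [simp]: "weight (map swap_letter u) (swap_letter c) = weight u c"
  by (simp add: weight_def comp_def)

lemma shuffle_coeff_map_swap_letter:
  "shuffle_coeff q u v w = shuffle_coeff q (map swap_letter u) (map swap_letter v) (map swap_letter w)"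
proof (induction w arbitrary: u v)
  case Nil
  then show ?case by (simp add: shuffle_coeff_empty_word)
next
  case (Cons c w)
  then show ?case
    by (cases u; cases v) (simp_all add: shuffle_coeff_Cons)
qed

lemma Cons_concat_replicate_swap: "a # concat (replicate k [b, a]) = concat (replicate k [a, b]) @ [a]"
  by (induction k) simp_all

lemma Gw_0 [simp]: "Gw 0 = []"
  and Gtw_0 [simp]: "Gtw 0 = []"
  by (simp_all add: Gw_def Gtw_def)

lemma Gw_Suc: "Gw (Suc k) = Y # Wneg k"
  by (simp add: Gw_def Wneg_def Cons_concat_replicate_swap)

lemma Gtw_Suc: "Gtw (Suc k) = X # Wpos k"
  by (simp add: Gtw_def Wpos_def Cons_concat_replicate_swap)

lemma Wneg_eq_Cons_Gw: "Wneg k = X # Gw k"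
  by (simp add: Gw_def Wneg_def Cons_concat_replicate_swap)

lemma Wpos_eq_Cons_Gtw: "Wpos k = Y # Gtw k"
  by (simp add: Gtw_def Wpos_def Cons_concat_replicate_swap)

lemma Wneg_eq_snoc_Gtw: "Wneg k = Gtw k @ [X]"
  by (simp add: Wneg_def Gtw_def)

lemma Wpos_eq_snoc_Gw: "Wpos k = Gw k @ [Y]"
  by (simp add: Wpos_def Gw_def)

lemma weight_Gw [simp]: "weight (Gw k) c = 0"
  by (cases c; induction k) (simp_all add: Gw_def)

lemma weight_Gtw [simp]: "weight (Gtw k) c = 0"
  by (cases c; induction k) (simp_all add: Gtw_def)

lemma weight_Wneg [simp]: "weight (Wneg k) c = bform X c"
  by (simp add: Wneg_eq_Cons_Gw)

lemma weight_Wpos [simp]: "weight (Wpos k) c = bform Y c"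
  by (simp add: Wpos_eq_Cons_Gtw)

lemma rev_Gw: "rev (Gw k) = Gtw k"
  by (simp add: Gw_def Gtw_def rev_concat)

lemma rev_Gtw: "rev (Gtw k) = Gw k"
  by (metis rev_Gw rev_rev_ident)

lemma rev_Wneg: "rev (Wneg k) = Wneg k"
  by (subst (1) Wneg_eq_snoc_Gtw) (simp add: rev_Gtw Wneg_eq_Cons_Gw)

lemma rev_Wpos: "rev (Wpos k) = Wpos k"
  by (subst (1) Wpos_eq_snoc_Gw) (simp add: rev_Gw Wpos_eq_Cons_Gtw)

lemma map_swap_letter_Gw: "map swap_letter (Gw k) = Gtw k"
  by (induction k) (simp_all add: Gw_def Gtw_def)

lemma map_swap_letter_Gtw: "map swap_letter (Gtw k) = Gw k"
  by (induction k) (simp_all add: Gw_def Gtw_def)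

lemma map_swap_letter_Wneg: "map swap_letter (Wneg k) = Wpos k"
  by (simp add: Wneg_eq_Cons_Gw Wpos_eq_Cons_Gtw map_swap_letter_Gw)

lemma map_swap_letter_Wpos: "map swap_letter (Wpos k) = Wneg k"
  by (simp add: Wneg_eq_Cons_Gw Wpos_eq_Cons_Gtw map_swap_letter_Gtw)

lemma shuffle_coeff_Wneg_Wpos_Nil: "shuffle_coeff q (Wneg k) (Wpos j) [] = 0"
  by (simp add: shuffle_coeff_empty_word Wneg_eq_Cons_Gw)

lemma shuffle_coeff_Wneg_Wpos_X: "shuffle_coeff q (Wneg k) (Wpos j) (X # w) = shuffle_coeff q (Gw k) (Wpos j) w"
  by (simp add: shuffle_coeff_Cons Wneg_eq_Cons_Gw Wpos_eq_Cons_Gtw)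

lemma shuffle_coeff_Wneg_Wpos_Y:
  "shuffle_coeff q (Wneg k) (Wpos j) (Y # w) = q powi (-2) * shuffle_coeff q (Wneg k) (Gtw j) w"
  by (simp add: shuffle_coeff_Cons Wneg_eq_Cons_Gw Wpos_eq_Cons_Gtw)

lemma sum_shuffle_coeff_Gw_Gtw_Nil:
  "(\<Sum>k=0..Suc m. f k * shuffle_coeff q (Gw k) (Gtw (Suc m - k)) []) = 0"
  by (intro sum.neutral) (auto simp: shuffle_coeff_empty_word Gw_def Gtw_def)

lemma shuffle_coeff_Gw_Gtw_X:
  "shuffle_coeff q (Gw k) (Gtw j) (X # w) = (if j = 0 then 0 else shuffle_coeff q (Gw k) (Wpos (j - 1)) w)"
  by (cases k; cases j) (simp_all add: shuffle_coeff_Cons Gw_Suc Gtw_Suc)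

lemma shuffle_coeff_Gw_Gtw_Y:
  "shuffle_coeff q (Gw k) (Gtw j) (Y # w) = (if k = 0 then 0 else shuffle_coeff q (Wneg (k - 1)) (Gtw j) w)"
  by (cases k; cases j) (simp_all add: shuffle_coeff_Cons Gw_Suc Gtw_Suc)

lemma sum_shuffle_coeff_Gw_Gtw_X:
  "(\<Sum>k=0..Suc m. f k * shuffle_coeff q (Gw k) (Gtw (Suc m - k)) (X # w))
   = (\<Sum>k=0..m. f k * shuffle_coeff q (Gw k) (Wpos (m - k)) w)"
  by (simp add: sum.atLeast0_atMost_Suc shuffle_coeff_Gw_Gtw_X)

lemma sum_shuffle_coeff_Gw_Gtw_Y:
  "(\<Sum>k=0..Suc m. f k * shuffle_coeff q (Gw k) (Gtw (Suc m - k)) (Y # w))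
   = (\<Sum>k=0..m. f (Suc k) * shuffle_coeff q (Wneg k) (Gtw (m - k)) w)"
  unfolding sum.atLeast0_atMost_Suc_shift shuffle_coeff_Gw_Gtw_Y by simp

lemma power_int_mult_shift:
  fixes q :: "'a::field"
  assumes "q \<noteq> 0" and "i + j + 1 = l"
  shows "q * (q powi i * q powi j) = q powi l"
  using assms by (auto simp: power_int_add power_int_add_1)

lemma G_Gt_coeff_identity:
  fixes q :: "'a::field"
  assumes q: "q \<noteq> 0" and "n \<ge> 1"
  shows "(\<Sum>k=0..n. q powi (int n - 2 * int k) * shuffle_coeff q (Gw k) (Gtw (n - k)) w)
       = q * (\<Sum>k=0..n-1. q powi (int n - 1 - 2 * int k) * shuffle_coeff q (Wneg k) (Wpos (n - k - 1)) w)"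
proof -
  obtain m where n: "n = Suc m"
    using \<open>n \<ge> 1\<close> by (cases n) auto
  consider "w = []" | w' where "w = X # w'" | w' where "w = Y # w'"
    by (metis letter.exhaust list.exhaust)
  then show ?thesis
  proof cases
    case 1
    show ?thesis
      unfolding 1 n sum_shuffle_coeff_Gw_Gtw_Nil by (simp add: shuffle_coeff_Wneg_Wpos_Nil)
  next
    case (2 w')
    have "q * q powi (int n - 1 - 2 * int k) = q powi (int n - 2 * int k)" for k
      using power_int_mult_shift[OF q, of _ 0] by simp
    then show ?thesis
      unfolding 2 n sum_shuffle_coeff_Gw_Gtw_X
      by (simp add: shuffle_coeff_Wneg_Wpos_X sum_distrib_left mult.assoc[symmetric])
  next
    case (3 w')
    have "q * (q powi (int n - 1 - 2 * int k) * q powi (-2)) = q powi (int n - 2 * int (Suc k))" for k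
      by (rule power_int_mult_shift[OF q]) simp
    then show ?thesis
      unfolding 3 n sum_shuffle_coeff_Gw_Gtw_Y
      by (simp add: shuffle_coeff_Wneg_Wpos_Y sum_distrib_left mult.assoc[symmetric])
  qed
qed

lemma Gt_G_coeff_identity:
  fixes q :: "'a::field"
  assumes q: "q \<noteq> 0" and n: "n \<ge> 1"
  shows "(\<Sum>k=0..n. q powi (int n - 2 * int k) * shuffle_coeff q (Gtw k) (Gw (n - k)) w)
       = q * (\<Sum>k=0..n-1. q powi (2 * int k + 1 - int n) * shuffle_coeff q (Wpos (n - k - 1)) (Wneg k) w)"
proof -
  let ?w = "map swap_letter w"
  have "(\<Sum>k=0..n. q powi (int n - 2 * int k) * shuffle_coeff q (Gtw k) (Gw (n - k)) w)
      = (\<Sum>k=0..n. q powi (int n - 2 * int k) * shuffle_coeff q (Gw k) (Gtw (n - k)) ?w)"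
    by (subst shuffle_coeff_map_swap_letter) (simp add: map_swap_letter_Gw map_swap_letter_Gtw)
  also have "\<dots> = q * (\<Sum>k=0..n-1. q powi (int n - 1 - 2 * int k) * shuffle_coeff q (Wneg k) (Wpos (n - k - 1)) ?w)"
    by (rule G_Gt_coeff_identity[OF q n])
  also have "\<dots> = q * (\<Sum>k=0..n-1. q powi (int n - 1 - 2 * int k) * shuffle_coeff q (Wpos k) (Wneg (n - k - 1)) w)"
    by (subst (2) shuffle_coeff_map_swap_letter) (simp add: map_swap_letter_Wneg map_swap_letter_Wpos)
  also have "\<dots> = q * (\<Sum>k=0..n-1. q powi (2 * int k + 1 - int n) * shuffle_coeff q (Wpos (n - k - 1)) (Wneg k) w)"
    using n by (subst sum.atLeastAtMost_rev) (simp add: of_nat_diff algebra_simps)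
  finally show ?thesis .
qed

lemma G_Gt_coeff_identity_rev:
  fixes q :: "'a::field"
  assumes q: "q \<noteq> 0" and n: "n \<ge> 1"
  shows "(\<Sum>k=0..n. q powi (2 * int k - int n) * shuffle_coeff q (Gw k) (Gtw (n - k)) w)
       = q * (\<Sum>k=0..n-1. q powi (int n - 1 - 2 * int k) * shuffle_coeff q (Wpos (n - k - 1)) (Wneg k) w)"
proof -
  have "(\<Sum>k=0..n. q powi (2 * int k - int n) * shuffle_coeff q (Gw k) (Gtw (n - k)) w)
      = (\<Sum>k=0..n. q powi (int n - 2 * int k) * shuffle_coeff q (Gw (n - k)) (Gtw k) w)"
    by (subst sum.atLeastAtMost_rev) (simp add: of_nat_diff)
  also have "\<dots> = (\<Sum>k=0..n. q powi (int n - 2 * int k) * shuffle_coeff q (Gw k) (Gtw (n - k)) (rev w))"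
    by (subst shuffle_coeff_rev[OF q]) (simp add: rev_Gw rev_Gtw)
  also have "\<dots> = q * (\<Sum>k=0..n-1. q powi (int n - 1 - 2 * int k) * shuffle_coeff q (Wneg k) (Wpos (n - k - 1)) (rev w))"
    by (rule G_Gt_coeff_identity[OF q n])
  also have "\<dots> = q * (\<Sum>k=0..n-1. q powi (int n - 1 - 2 * int k) * shuffle_coeff q (Wpos (n - k - 1)) (Wneg k) w)"
    by (subst shuffle_coeff_rev[OF q]) (simp add: rev_Wneg rev_Wpos)
  finally show ?thesis .
qed

lemma Gt_G_coeff_identity_rev:
  fixes q :: "'a::field"
  assumes q: "q \<noteq> 0" and n: "n \<ge> 1"
  shows "(\<Sum>k=0..n. q powi (2 * int k - int n) * shuffle_coeff q (Gtw k) (Gw (n - k)) w)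
       = q * (\<Sum>k=0..n-1. q powi (2 * int k + 1 - int n) * shuffle_coeff q (Wneg k) (Wpos (n - k - 1)) w)"
proof -
  have "(\<Sum>k=0..n. q powi (2 * int k - int n) * shuffle_coeff q (Gtw k) (Gw (n - k)) w)
      = (\<Sum>k=0..n. q powi (int n - 2 * int k) * shuffle_coeff q (Gtw (n - k)) (Gw k) w)"
    by (subst sum.atLeastAtMost_rev) (simp add: of_nat_diff)
  also have "\<dots> = (\<Sum>k=0..n. q powi (int n - 2 * int k) * shuffle_coeff q (Gtw k) (Gw (n - k)) (rev w))"
    by (subst shuffle_coeff_rev[OF q]) (simp add: rev_Gw rev_Gtw)
  also have "\<dots> = q * (\<Sum>k=0..n-1. q powi (2 * int k + 1 - int n) * shuffle_coeff q (Wpos (n - k - 1)) (Wneg k) (rev w))"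
    by (rule Gt_G_coeff_identity[OF q n])
  also have "\<dots> = q * (\<Sum>k=0..n-1. q powi (2 * int k + 1 - int n) * shuffle_coeff q (Wneg k) (Wpos (n - k - 1)) w)"
    by (subst shuffle_coeff_rev[OF q]) (simp add: rev_Wneg rev_Wpos)
  finally show ?thesis .
qed

theorem proposition8p1:
  fixes q :: "'a::field" and n :: nat
  assumes "q \<noteq> 0" and "\<And>m::nat. m > 0 \<Longrightarrow> q ^ m \<noteq> 1" and "n \<ge> 1"
  shows
   "((\<Sum>k=0..n. vsmult (q powi (int n - 2 * int k)) (qshuffle q (wd (Gw k)) (wd (Gtw (n - k)))))
      = vsmult q (\<Sum>k=0..n-1. vsmult (q powi (int n - 1 - 2 * int k))
                              (qshuffle q (wd (Wneg k)) (wd (Wpos (n - k - 1))))))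
    \<and> ((\<Sum>k=0..n. vsmult (q powi (2 * int k - int n)) (qshuffle q (wd (Gw k)) (wd (Gtw (n - k)))))
      = vsmult q (\<Sum>k=0..n-1. vsmult (q powi (int n - 1 - 2 * int k))
                              (qshuffle q (wd (Wpos (n - k - 1))) (wd (Wneg k)))))
    \<and> ((\<Sum>k=0..n. vsmult (q powi (int n - 2 * int k)) (qshuffle q (wd (Gtw k)) (wd (Gw (n - k)))))
      = vsmult q (\<Sum>k=0..n-1. vsmult (q powi (2 * int k + 1 - int n))
                              (qshuffle q (wd (Wpos (n - k - 1))) (wd (Wneg k)))))
    \<and> ((\<Sum>k=0..n. vsmult (q powi (2 * int k - int n)) (qshuffle q (wd (Gtw k)) (wd (Gw (n - k)))))
      = vsmult q (\<Sum>k=0..n-1. vsmult (q powi (2 * int k + 1 - int n))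
                              (qshuffle q (wd (Wneg k)) (wd (Wpos (n - k - 1))))))"
proof -
  note coeff_identities =
    G_Gt_coeff_identity[OF assms(1,3)] G_Gt_coeff_identity_rev[OF assms(1,3)]
    Gt_G_coeff_identity[OF assms(1,3)] Gt_G_coeff_identity_rev[OF assms(1,3)]
  show ?thesis
    by (intro conjI poly_mapping_eqI) (simp_all only: lookup_vsmult lookup_sum_qshuffle_wd coeff_identities)
qed

end
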